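(* Let $X_1,\dots,X_p$ be metrizable spaces and $B\hookrightarrow A\twoheadrightarrow A/B$ an exact sequence of Polish Abelian groups ($B$ closed in $A$; no continuous cross-section is assumed). Then every almost layered function $f:X_{\le p}\times I^p\to A/B$ has an almost layered lift $F:X_{\le p}\times I^p\to A$.
   Context: Let $I=(0,1]$. A continuous dissection over a metrizable $X$ is a locally finite family $\mathcal{F}$ of continuous functions $X\to[0,1]$ containing $0,1$ (every point has a neighbourhood $U$ with $\{\xi|_U:\xi\in\mathcal{F}\}$ finite); l-complete means closed under pointwise max, min, and pointwise limits of convergent directed families. An $\mathcal{F}$-wedge is $\{(x,t):\xi_1(x)<t\le\xi_2(x)\}$. With $X_{\le i}=X_1\times\cdots\times X_i$, an ascending tuple $(\mathcal{F}_1,\dots,\mathcal{F}_p)$ has $\mathcal{F}_i$ a continuous dissection over $X_{\le i}$; a multiwedge is $\{(x_1,\dots,x_p,t_1,\dots,t_p):(x_1,\dots,x_i,t_i)\in C_i\ \forall i\}$ with $C_i$ an $\mathcal{F}_i$-wedge; minimal = nonempty and inclusion-minimal. A function $\gamma:X_{\le p}\times I^p\to A$ is layered if for some ascending tuple of l-complete continuous dissections it is constant on every minimal multiwedge. For a Polish Abelian group $A$ with a translation-invariant compatible metric $d$ (the resulting notion is independent of this choice), a function is almost layered if it is a uniform limit (in the sup-metric induced by $d$) of layered functions. On $A/B$ one uses the quotient metric. *)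

theory Defs
  imports "HOL-Analysis.Analysis"
begin

definition Iint :: "real set" where "Iint = {0<..1}"

text \<open>Continuous dissection over a (metrizable) space T.  Functions are
  compared only on the points of T.\<close>
definition cont_dissection :: "'p topology \<Rightarrow> ('p \<Rightarrow> real) set \<Rightarrow> bool" where
  "cont_dissection T F \<longleftrightarrow>
     (\<forall>\<xi>\<in>F. continuous_map T euclideanreal \<xi> \<and> \<xi> ` topspace T \<subseteq> {0..1}) \<and>
     (\<exists>\<xi>\<in>F. \<forall>x\<in>topspace T. \<xi> x = 0) \<and>
     (\<exists>\<xi>\<in>F. \<forall>x\<in>topspace T. \<xi> x = 1) \<and>
     (\<forall>x\<in>topspace T. \<exists>U. openin T U \<and> x \<in> U \<and> finite ((\<lambda>\<xi>. restrict \<xi> U) ` F))"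

text \<open>l-completeness: closed under pointwise max, min, and pointwise limits of
  convergent directed families (nets in F; a net is encoded by its image filter
  on the function space).\<close>
definition l_complete :: "'p topology \<Rightarrow> ('p \<Rightarrow> real) set \<Rightarrow> bool" where
  "l_complete T F \<longleftrightarrow>
     (\<forall>\<xi>1\<in>F. \<forall>\<xi>2\<in>F. \<exists>\<eta>\<in>F. \<forall>x\<in>topspace T. \<eta> x = max (\<xi>1 x) (\<xi>2 x)) \<and>
     (\<forall>\<xi>1\<in>F. \<forall>\<xi>2\<in>F. \<exists>\<eta>\<in>F. \<forall>x\<in>topspace T. \<eta> x = min (\<xi>1 x) (\<xi>2 x)) \<and>
     (\<forall>(N :: ('p \<Rightarrow> real) filter) g. N \<noteq> bot \<and> eventually (\<lambda>\<xi>. \<xi> \<in> F) N \<and>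
        (\<forall>x\<in>topspace T. ((\<lambda>\<xi>. \<xi> x) \<longlongrightarrow> g x) N)
        \<longrightarrow> (\<exists>\<eta>\<in>F. \<forall>x\<in>topspace T. \<eta> x = g x))"

text \<open>X_{<= i} = X_1 x ... x X_i, with the spaces indexed 0..i-1 (Xs 0 = X_1).\<close>
definition Xle :: "(nat \<Rightarrow> 'a topology) \<Rightarrow> nat \<Rightarrow> (nat \<Rightarrow> 'a) topology" where
  "Xle Xs i = product_topology Xs {..<i}"

definition dom_layer :: "(nat \<Rightarrow> 'a topology) \<Rightarrow> nat \<Rightarrow> ((nat \<Rightarrow> 'a) \<times> (nat \<Rightarrow> real)) set" where
  "dom_layer Xs p = topspace (Xle Xs p) \<times> (PiE {..<p} (\<lambda>_. Iint))"

definition ascending_lc :: "(nat \<Rightarrow> 'a topology) \<Rightarrow> nat \<Rightarrow> (nat \<Rightarrow> ((nat \<Rightarrow> 'a) \<Rightarrow> real) set) \<Rightarrow> bool" where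
  "ascending_lc Xs p Fs \<longleftrightarrow>
     (\<forall>i<p. cont_dissection (Xle Xs (Suc i)) (Fs i) \<and> l_complete (Xle Xs (Suc i)) (Fs i))"

definition wedge :: "'p topology \<Rightarrow> ('p \<Rightarrow> real) \<Rightarrow> ('p \<Rightarrow> real) \<Rightarrow> ('p \<times> real) set" where
  "wedge T \<xi>1 \<xi>2 = {(x, t). x \<in> topspace T \<and> t \<in> Iint \<and> \<xi>1 x < t \<and> t \<le> \<xi>2 x}"

definition multiwedge :: "(nat \<Rightarrow> 'a topology) \<Rightarrow> nat \<Rightarrow> (nat \<Rightarrow> ((nat \<Rightarrow> 'a) \<Rightarrow> real) set)
     \<Rightarrow> ((nat \<Rightarrow> 'a) \<times> (nat \<Rightarrow> real)) set \<Rightarrow> bool" where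
  "multiwedge Xs p Fs M \<longleftrightarrow>
     (\<exists>\<xi>1 \<xi>2. (\<forall>i<p. \<xi>1 i \<in> Fs i \<and> \<xi>2 i \<in> Fs i) \<and>
        M = {(x, t) \<in> dom_layer Xs p.
               \<forall>i<p. (restrict x {..<Suc i}, t i) \<in> wedge (Xle Xs (Suc i)) (\<xi>1 i) (\<xi>2 i)})"

definition minimal_multiwedge where
  "minimal_multiwedge Xs p Fs M \<longleftrightarrow>
     multiwedge Xs p Fs M \<and> M \<noteq> {} \<and>
     (\<forall>M'. multiwedge Xs p Fs M' \<and> M' \<noteq> {} \<and> M' \<subseteq> M \<longrightarrow> M' = M)"

definition layered :: "(nat \<Rightarrow> 'a topology) \<Rightarrow> nat \<Rightarrow> ((nat \<Rightarrow> 'a) \<times> (nat \<Rightarrow> real) \<Rightarrow> 'b) \<Rightarrow> bool" where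
  "layered Xs p \<gamma> \<longleftrightarrow>
     (\<exists>Fs. ascending_lc Xs p Fs \<and>
        (\<forall>M. minimal_multiwedge Xs p Fs M \<longrightarrow> (\<exists>c. \<forall>z\<in>M. \<gamma> z = c)))"

definition almost_layered :: "(nat \<Rightarrow> 'a topology) \<Rightarrow> nat \<Rightarrow> 'b set \<Rightarrow> ('b \<Rightarrow> 'b \<Rightarrow> real)
     \<Rightarrow> ((nat \<Rightarrow> 'a) \<times> (nat \<Rightarrow> real) \<Rightarrow> 'b) \<Rightarrow> bool" where
  "almost_layered Xs p Y \<delta> f \<longleftrightarrow>
     (\<forall>z\<in>dom_layer Xs p. f z \<in> Y) \<and>
     (\<exists>g :: nat \<Rightarrow> ((nat \<Rightarrow> 'a) \<times> (nat \<Rightarrow> real) \<Rightarrow> 'b).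
        (\<forall>n. layered Xs p (g n) \<and> (\<forall>z\<in>dom_layer Xs p. g n z \<in> Y)) \<and>
        (\<forall>\<epsilon>>0. \<exists>N. \<forall>n\<ge>N. \<forall>z\<in>dom_layer Xs p. \<delta> (f z) (g n z) \<le> \<epsilon>))"

text \<open>Quotient A/B: elements are the cosets a + B.\<close>
definition coset :: "'g::ab_group_add set \<Rightarrow> 'g \<Rightarrow> 'g set" where
  "coset B a = (\<lambda>b. a + b) ` B"

definition quotient_set :: "'g::ab_group_add set \<Rightarrow> 'g set set" where
  "quotient_set B = range (coset B)"

definition quot_dist :: "'g::metric_space set \<Rightarrow> 'g set \<Rightarrow> real" where
  "quot_dist U V = Inf {dist u v | u v. u \<in> U \<and> v \<in> V}"

end

theory Submission
  imports Defs
begin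

text \<open>
  Write f = lim g_n uniformly with layered g_n.  After passing to a subsequence, the cosets g_k z
  approximate f z within (1/2)^(k+1).  Starting from a point of g_0 z, we select successively a
  point of g_(k+1) z within (1/2)^k of the previous one; the selection is a fixed function of the
  previous point and the next coset, so each stage is again layered.  The selections form a uniform
  geometric Cauchy sequence, whose limit F is almost layered and, B being closed, represents f.
\<close>

lemma cont_dissection_values_finite:
  assumes "cont_dissection T F" and "x \<in> topspace T"
  shows "finite ((\<lambda>\<xi>. \<xi> x) ` F)"
proof -
  obtain U where U: "x \<in> U" "finite ((\<lambda>\<xi>. restrict \<xi> U) ` F)"
    using assms unfolding cont_dissection_def by blast
  have "(\<lambda>\<xi>. \<xi> x) ` F = (\<lambda>r. r x) ` (\<lambda>\<xi>. restrict \<xi> U) ` F"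
    using U by (auto simp: image_image)
  then show ?thesis using U by simp
qed

lemma l_complete_max:
  "l_complete T F \<Longrightarrow> a \<in> F \<Longrightarrow> b \<in> F \<Longrightarrow> \<exists>m\<in>F. \<forall>y\<in>topspace T. m y = max (a y) (b y)"
  unfolding l_complete_def by blast

lemma l_complete_min:
  "l_complete T F \<Longrightarrow> a \<in> F \<Longrightarrow> b \<in> F \<Longrightarrow> \<exists>m\<in>F. \<forall>y\<in>topspace T. m y = min (a y) (b y)"
  unfolding l_complete_def by blast

lemma l_complete_directed_limit:
  assumes lF: "l_complete T F" and sub: "S \<subseteq> F" and ne: "S \<noteq> {}"
    and refl: "\<And>a. a \<in> S \<Longrightarrow> R a a"
    and trans: "\<And>a b c. R a b \<Longrightarrow> R b c \<Longrightarrow> R a c"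
    and dir: "\<And>a b. a \<in> S \<Longrightarrow> b \<in> S \<Longrightarrow> \<exists>m\<in>S. R a m \<and> R b m"
    and stable: "\<And>y. y \<in> topspace T \<Longrightarrow> \<exists>a\<in>S. \<forall>\<eta>\<in>S. R a \<eta> \<longrightarrow> \<eta> y = g y"
  shows "\<exists>\<eta>\<in>F. \<forall>y\<in>topspace T. \<eta> y = g y"
proof -
  define above where "above a = {\<eta>\<in>S. R a \<eta>}" for a
  define N where "N = (INF a\<in>S. principal (above a))"
  have evN: "eventually P N \<longleftrightarrow> (\<exists>a\<in>S. \<forall>\<eta>\<in>above a. P \<eta>)" for P
  proof -
    have "\<exists>m\<in>S. principal (above m) \<le> inf (principal (above a)) (principal (above b))"
      if ab: "a \<in> S" "b \<in> S" for a b
    proof -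
      obtain m where "m \<in> S" "R a m" "R b m" using dir[OF ab] by blast
      then have "above m \<subseteq> above a \<inter> above b" using trans unfolding above_def by blast
      then show ?thesis using \<open>m \<in> S\<close> by auto
    qed
    then show ?thesis
      unfolding N_def by (subst eventually_INF_base[OF ne]) (auto simp: eventually_principal)
  qed
  have "N \<noteq> bot"
    using evN[of "\<lambda>_. False"] refl by (auto simp: above_def simp flip: trivial_limit_def)
  moreover have "eventually (\<lambda>\<eta>. \<eta> \<in> F) N"
    using evN ne sub by (auto simp: above_def)
  moreover have "((\<lambda>\<eta>. \<eta> y) \<longlongrightarrow> g y) N" if "y \<in> topspace T" for y
    using stable[OF that] by (intro tendsto_eventually) (auto simp: evN above_def)
  ultimately show ?thesis
    using lF unfolding l_complete_def by blast
qed

text \<open>Given a point (x,t), the largest member of F lying below t at x exists: it is the pointwise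
  maximum of the (directed) subfamily of such members, attained locally by finiteness.\<close>
lemma dissection_lower_envelope:
  assumes cF: "cont_dissection T F" and lF: "l_complete T F"
    and x: "x \<in> topspace T" and t: "0 < t"
  shows "\<exists>lo\<in>F. lo x < t \<and> (\<forall>\<xi>\<in>F. \<xi> x < t \<longrightarrow> (\<forall>y\<in>topspace T. \<xi> y \<le> lo y))"
proof -
  define S where "S = {\<xi>\<in>F. \<xi> x < t}"
  define g where "g y = Max ((\<lambda>\<xi>. \<xi> y) ` S)" for y
  have fin: "finite ((\<lambda>\<xi>. \<xi> y) ` S)" if "y \<in> topspace T" for y
    using cont_dissection_values_finite[OF cF that] unfolding S_def
    by (rule finite_subset[rotated]) auto
  have ne: "S \<noteq> {}"
    using cF x t unfolding cont_dissection_def S_def by force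
  have "\<exists>lo\<in>F. \<forall>y\<in>topspace T. lo y = g y"
  proof (rule l_complete_directed_limit[OF lF _ ne,
        where R = "\<lambda>a b. \<forall>y\<in>topspace T. a y \<le> b y"])
    fix a b assume "a \<in> S" "b \<in> S"
    then show "\<exists>m\<in>S. (\<forall>y\<in>topspace T. a y \<le> m y) \<and> (\<forall>y\<in>topspace T. b y \<le> m y)"
      using l_complete_max[OF lF, of a b] x unfolding S_def by force
  next
    fix y assume y: "y \<in> topspace T"
    have "g y \<in> (\<lambda>\<xi>. \<xi> y) ` S"
      unfolding g_def using Max_in[OF fin[OF y]] ne by blast
    then obtain a where "a \<in> S" "a y = g y" by force
    moreover have "\<eta> y \<le> g y" if "\<eta> \<in> S" for \<eta>
      unfolding g_def using fin[OF y] that by auto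
    ultimately show "\<exists>a\<in>S. \<forall>\<eta>\<in>S. (\<forall>y\<in>topspace T. a y \<le> \<eta> y) \<longrightarrow> \<eta> y = g y"
      using y by force
  qed (force simp: S_def intro: order.trans)+
  then obtain lo where lo: "lo \<in> F" "\<forall>y\<in>topspace T. lo y = g y" by blast
  have "g x \<in> (\<lambda>\<xi>. \<xi> x) ` S"
    unfolding g_def using Max_in[OF fin[OF x]] ne by auto
  then have "lo x < t" using lo x unfolding S_def by auto
  moreover have "\<xi> y \<le> lo y" if "\<xi> \<in> F" "\<xi> x < t" "y \<in> topspace T" for \<xi> y
    using lo fin that unfolding g_def S_def by auto
  ultimately show ?thesis using lo by blast
qed

lemma dissection_upper_envelope:
  assumes cF: "cont_dissection T F" and lF: "l_complete T F"
    and x: "x \<in> topspace T" and t: "t \<le> 1"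
  shows "\<exists>up\<in>F. t \<le> up x \<and> (\<forall>\<xi>\<in>F. t \<le> \<xi> x \<longrightarrow> (\<forall>y\<in>topspace T. up y \<le> \<xi> y))"
proof -
  define S where "S = {\<xi>\<in>F. t \<le> \<xi> x}"
  define g where "g y = Min ((\<lambda>\<xi>. \<xi> y) ` S)" for y
  have fin: "finite ((\<lambda>\<xi>. \<xi> y) ` S)" if "y \<in> topspace T" for y
    using cont_dissection_values_finite[OF cF that] unfolding S_def
    by (rule finite_subset[rotated]) auto
  have ne: "S \<noteq> {}"
    using cF x t unfolding cont_dissection_def S_def by force
  have "\<exists>up\<in>F. \<forall>y\<in>topspace T. up y = g y"
  proof (rule l_complete_directed_limit[OF lF _ ne,
        where R = "\<lambda>a b. \<forall>y\<in>topspace T. b y \<le> a y"])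
    fix a b assume "a \<in> S" "b \<in> S"
    then show "\<exists>m\<in>S. (\<forall>y\<in>topspace T. m y \<le> a y) \<and> (\<forall>y\<in>topspace T. m y \<le> b y)"
      using l_complete_min[OF lF, of a b] x unfolding S_def by force
  next
    fix y assume y: "y \<in> topspace T"
    have "g y \<in> (\<lambda>\<xi>. \<xi> y) ` S"
      unfolding g_def using Min_in[OF fin[OF y]] ne by blast
    then obtain a where "a \<in> S" "a y = g y" by force
    moreover have "g y \<le> \<eta> y" if "\<eta> \<in> S" for \<eta>
      unfolding g_def using fin[OF y] that by auto
    ultimately show "\<exists>a\<in>S. \<forall>\<eta>\<in>S. (\<forall>y\<in>topspace T. \<eta> y \<le> a y) \<longrightarrow> \<eta> y = g y"
      using y by force
  qed (force simp: S_def intro: order.trans)+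
  then obtain up where up: "up \<in> F" "\<forall>y\<in>topspace T. up y = g y" by blast
  have "g x \<in> (\<lambda>\<xi>. \<xi> x) ` S"
    unfolding g_def using Min_in[OF fin[OF x]] ne by auto
  then have "t \<le> up x" using up x unfolding S_def by auto
  moreover have "up y \<le> \<xi> y" if "\<xi> \<in> F" "t \<le> \<xi> x" "y \<in> topspace T" for \<xi> y
    using up fin that unfolding g_def S_def by auto
  ultimately show ?thesis using up by blast
qed

text \<open>Every point (x,t) lies in a wedge spanned by its lower and upper envelopes, and this wedge is
  contained in every F-wedge meeting it; in particular it is a minimal F-wedge.\<close>
lemma minimal_wedge_exists:
  assumes cF: "cont_dissection T F" and lF: "l_complete T F"
    and x: "x \<in> topspace T" and t: "t \<in> Iint"
  shows "\<exists>lo\<in>F. \<exists>up\<in>F. (x, t) \<in> wedge T lo up \<and>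
           (\<forall>\<xi>1\<in>F. \<forall>\<xi>2\<in>F. wedge T \<xi>1 \<xi>2 \<inter> wedge T lo up \<noteq> {} \<longrightarrow> wedge T lo up \<subseteq> wedge T \<xi>1 \<xi>2)"
proof -
  have t01: "0 < t" "t \<le> 1" using t unfolding Iint_def by auto
  obtain lo where lo: "lo \<in> F" "lo x < t"
    and lo_max: "\<And>\<xi> y. \<xi> \<in> F \<Longrightarrow> \<xi> x < t \<Longrightarrow> y \<in> topspace T \<Longrightarrow> \<xi> y \<le> lo y"
    using dissection_lower_envelope[OF cF lF x t01(1)] by blast
  obtain up where up: "up \<in> F" "t \<le> up x"
    and up_min: "\<And>\<xi> y. \<xi> \<in> F \<Longrightarrow> t \<le> \<xi> x \<Longrightarrow> y \<in> topspace T \<Longrightarrow> up y \<le> \<xi> y"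
    using dissection_upper_envelope[OF cF lF x t01(2)] by blast
  have refines: "wedge T lo up \<subseteq> wedge T \<xi>1 \<xi>2"
    if \<xi>: "\<xi>1 \<in> F" "\<xi>2 \<in> F" and meet: "wedge T \<xi>1 \<xi>2 \<inter> wedge T lo up \<noteq> {}"
    for \<xi>1 \<xi>2
  proof -
    obtain x' t' where "(x', t') \<in> wedge T \<xi>1 \<xi>2 \<inter> wedge T lo up"
      using meet by auto
    then have x': "x' \<in> topspace T"
      and in\<xi>: "\<xi>1 x' < t'" "t' \<le> \<xi>2 x'" and inlu: "lo x' < t'" "t' \<le> up x'"
      by (auto simp: wedge_def)
    have "\<xi>1 x < t"
    proof (rule ccontr)
      assume "\<not> \<xi>1 x < t"
      obtain m where m: "m \<in> F" "\<forall>y\<in>topspace T. m y = max (\<xi>1 y) (lo y)"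
        using l_complete_max[OF lF \<xi>(1) lo(1)] by blast
      obtain w where w: "w \<in> F" "\<forall>y\<in>topspace T. w y = min (m y) (up y)"
        using l_complete_min[OF lF m(1) up(1)] by blast
      have "t \<le> w x" using w m x up(2) \<open>\<not> \<xi>1 x < t\<close> by auto
      then have "up x' \<le> w x'" using up_min[OF w(1) _ x'] by blast
      moreover have "w x' < t'" using w m x' in\<xi>(1) inlu(1) by auto
      ultimately show False using inlu(2) by linarith
    qed
    moreover have "t \<le> \<xi>2 x"
    proof (rule ccontr)
      assume "\<not> t \<le> \<xi>2 x"
      obtain m where m: "m \<in> F" "\<forall>y\<in>topspace T. m y = min (\<xi>2 y) (up y)"
        using l_complete_min[OF lF \<xi>(2) up(1)] by blast
      obtain w where w: "w \<in> F" "\<forall>y\<in>topspace T. w y = max (m y) (lo y)"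
        using l_complete_max[OF lF m(1) lo(1)] by blast
      have "w x < t" using w m x lo(2) \<open>\<not> t \<le> \<xi>2 x\<close> by auto
      then have "w x' \<le> lo x'" using lo_max[OF w(1) _ x'] by blast
      moreover have "t' \<le> w x'" using w m x' in\<xi>(2) inlu(2) by auto
      ultimately show False using inlu(1) by linarith
    qed
    ultimately have bounds: "\<xi>1 y \<le> lo y" "up y \<le> \<xi>2 y" if "y \<in> topspace T" for y
      using lo_max[OF \<xi>(1) _ that] up_min[OF \<xi>(2) _ that] by auto
    show ?thesis
    proof
      fix z assume "z \<in> wedge T lo up"
      then obtain y s where z: "z = (y, s)" "y \<in> topspace T" "s \<in> Iint" "lo y < s" "s \<le> up y"
        by (auto simp: wedge_def)
      then show "z \<in> wedge T \<xi>1 \<xi>2"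
        using bounds[OF z(2)] unfolding wedge_def by auto
    qed
  qed
  have "(x, t) \<in> wedge T lo up" using x t lo up unfolding wedge_def by auto
  with refines show ?thesis
    by (intro bexI[OF _ lo(1)] bexI[OF _ up(1)] conjI ballI impI) auto
qed

definition multiwedge_set :: "(nat \<Rightarrow> 'a topology) \<Rightarrow> nat \<Rightarrow> (nat \<Rightarrow> (nat \<Rightarrow> 'a) \<Rightarrow> real)
    \<Rightarrow> (nat \<Rightarrow> (nat \<Rightarrow> 'a) \<Rightarrow> real) \<Rightarrow> ((nat \<Rightarrow> 'a) \<times> (nat \<Rightarrow> real)) set" where
  "multiwedge_set Xs p \<xi>1 \<xi>2 = {(x, t) \<in> dom_layer Xs p.
     \<forall>i<p. (restrict x {..<Suc i}, t i) \<in> wedge (Xle Xs (Suc i)) (\<xi>1 i) (\<xi>2 i)}"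

lemma multiwedge_iff:
  "multiwedge Xs p Fs M \<longleftrightarrow>
     (\<exists>\<xi>1 \<xi>2. (\<forall>i<p. \<xi>1 i \<in> Fs i \<and> \<xi>2 i \<in> Fs i) \<and> M = multiwedge_set Xs p \<xi>1 \<xi>2)"
  unfolding multiwedge_def multiwedge_set_def by simp

lemma multiwedge_set_mono:
  assumes "\<And>i. i < p \<Longrightarrow> wedge (Xle Xs (Suc i)) (a1 i) (a2 i) \<subseteq> wedge (Xle Xs (Suc i)) (b1 i) (b2 i)"
  shows "multiwedge_set Xs p a1 a2 \<subseteq> multiwedge_set Xs p b1 b2"
  using assms unfolding multiwedge_set_def by blast

lemma multiwedge_set_Int:
  assumes "\<And>i. i < p \<Longrightarrow> wedge (Xle Xs (Suc i)) (c1 i) (c2 i)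
             = wedge (Xle Xs (Suc i)) (a1 i) (a2 i) \<inter> wedge (Xle Xs (Suc i)) (b1 i) (b2 i)"
  shows "multiwedge_set Xs p c1 c2 = multiwedge_set Xs p a1 a2 \<inter> multiwedge_set Xs p b1 b2"
  using assms unfolding multiwedge_set_def by blast

lemma multiwedge_subset_dom: "multiwedge Xs p Fs M \<Longrightarrow> M \<subseteq> dom_layer Xs p"
  unfolding multiwedge_def by auto

lemma multiwedge_family_mono:
  "multiwedge Xs p Fs M \<Longrightarrow> (\<And>i. i < p \<Longrightarrow> Fs i \<subseteq> Hs i) \<Longrightarrow> multiwedge Xs p Hs M"
  unfolding multiwedge_def by blast

lemma wedge_max_min:
  assumes "\<forall>y\<in>topspace T. c1 y = max (a1 y) (b1 y)" and "\<forall>y\<in>topspace T. c2 y = min (a2 y) (b2 y)"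
  shows "wedge T c1 c2 = wedge T a1 a2 \<inter> wedge T b1 b2"
  using assms unfolding wedge_def by auto

lemma restrict_in_Xle:
  assumes "x \<in> topspace (Xle Xs p)" "i < p"
  shows "restrict x {..<Suc i} \<in> topspace (Xle Xs (Suc i))"
  using assms unfolding Xle_def by (auto simp: PiE_iff)

text \<open>Minimal multiwedges cover the domain: take at each level the minimal wedge through the
  projected point; any nonempty multiwedge inside their product contains it.\<close>
lemma minimal_multiwedge_cover:
  assumes asc: "ascending_lc Xs p Fs" and z: "z \<in> dom_layer Xs p"
  shows "\<exists>M. minimal_multiwedge Xs p Fs M \<and> z \<in> M"
proof -
  let ?T = "\<lambda>i. Xle Xs (Suc i)"
  obtain x t where zxt: "z = (x, t)" and x: "x \<in> topspace (Xle Xs p)"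
    and t: "t \<in> PiE {..<p} (\<lambda>_. Iint)"
    using z unfolding dom_layer_def by auto
  define good where "good i lu \<longleftrightarrow> fst lu \<in> Fs i \<and> snd lu \<in> Fs i \<and>
      (restrict x {..<Suc i}, t i) \<in> wedge (?T i) (fst lu) (snd lu) \<and>
      (\<forall>\<xi>1\<in>Fs i. \<forall>\<xi>2\<in>Fs i. wedge (?T i) \<xi>1 \<xi>2 \<inter> wedge (?T i) (fst lu) (snd lu) \<noteq> {}
         \<longrightarrow> wedge (?T i) (fst lu) (snd lu) \<subseteq> wedge (?T i) \<xi>1 \<xi>2)" for i lu
  have "\<forall>i\<in>{..<p}. \<exists>lu. good i lu"
  proof
    fix i assume "i \<in> {..<p}"
    then have "cont_dissection (?T i) (Fs i)" "l_complete (?T i) (Fs i)"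
      "restrict x {..<Suc i} \<in> topspace (?T i)" "t i \<in> Iint"
      using asc x t restrict_in_Xle unfolding ascending_lc_def by auto
    from minimal_wedge_exists[OF this] obtain lo up where "lo \<in> Fs i" "up \<in> Fs i"
      "(restrict x {..<Suc i}, t i) \<in> wedge (?T i) lo up"
      "\<forall>\<xi>1\<in>Fs i. \<forall>\<xi>2\<in>Fs i. wedge (?T i) \<xi>1 \<xi>2 \<inter> wedge (?T i) lo up \<noteq> {}
         \<longrightarrow> wedge (?T i) lo up \<subseteq> wedge (?T i) \<xi>1 \<xi>2"
      by blast
    then show "\<exists>lu. good i lu"
      unfolding good_def by (intro exI[of _ "(lo, up)"]) simp
  qed
  then obtain lu where lu: "\<And>i. i < p \<Longrightarrow> good i (lu i)"
    using bchoice[of "{..<p}" good] by auto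
  define M where "M = multiwedge_set Xs p (fst \<circ> lu) (snd \<circ> lu)"
  have mwM: "multiwedge Xs p Fs M"
    unfolding multiwedge_iff M_def using lu unfolding good_def
    by (intro exI[of _ "fst \<circ> lu"] exI[of _ "snd \<circ> lu"]) auto
  have zM: "z \<in> M"
  proof -
    have "\<forall>i<p. (restrict x {..<Suc i}, t i) \<in> wedge (?T i) ((fst \<circ> lu) i) ((snd \<circ> lu) i)"
      using lu unfolding good_def by simp
    then show ?thesis using z unfolding zxt M_def multiwedge_set_def by simp
  qed
  have "M \<subseteq> M'" if M': "multiwedge Xs p Fs M'" "M' \<noteq> {}" "M' \<subseteq> M" for M'
  proof -
    obtain \<xi>1 \<xi>2 where \<xi>: "\<forall>i<p. \<xi>1 i \<in> Fs i \<and> \<xi>2 i \<in> Fs i" "M' = multiwedge_set Xs p \<xi>1 \<xi>2"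
      using M'(1) unfolding multiwedge_iff by blast
    obtain x' t' where z': "(x', t') \<in> M'" using M'(2) by auto
    show ?thesis
      unfolding M_def \<xi>(2)
    proof (rule multiwedge_set_mono)
      fix i assume i: "i < p"
      have meet: "(restrict x' {..<Suc i}, t' i) \<in> wedge (?T i) (\<xi>1 i) (\<xi>2 i) \<inter> wedge (?T i) (fst (lu i)) (snd (lu i))"
        using z' M'(3) i unfolding \<xi>(2) M_def multiwedge_set_def by auto
      have "\<xi>1 i \<in> Fs i" "\<xi>2 i \<in> Fs i" using \<xi>(1) i by auto
      with lu[OF i] meet
      show "wedge (?T i) ((fst \<circ> lu) i) ((snd \<circ> lu) i) \<subseteq> wedge (?T i) (\<xi>1 i) (\<xi>2 i)"
        unfolding good_def by (metis comp_apply empty_iff)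
    qed
  qed
  then have "minimal_multiwedge Xs p Fs M"
    unfolding minimal_multiwedge_def using mwM zM by blast
  then show ?thesis using zM by blast
qed

lemma multiwedge_Int:
  assumes asc: "ascending_lc Xs p Hs" and M: "multiwedge Xs p Hs M" and C: "multiwedge Xs p Hs C"
  shows "multiwedge Xs p Hs (M \<inter> C)"
proof -
  let ?T = "\<lambda>i. Xle Xs (Suc i)"
  obtain a1 a2 where a: "\<forall>i<p. a1 i \<in> Hs i \<and> a2 i \<in> Hs i" "M = multiwedge_set Xs p a1 a2"
    using M unfolding multiwedge_iff by blast
  obtain b1 b2 where b: "\<forall>i<p. b1 i \<in> Hs i \<and> b2 i \<in> Hs i" "C = multiwedge_set Xs p b1 b2"
    using C unfolding multiwedge_iff by blast
  have "\<forall>i\<in>{..<p}. \<exists>c. fst c \<in> Hs i \<and> snd c \<in> Hs i \<and>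
          wedge (?T i) (fst c) (snd c) = wedge (?T i) (a1 i) (a2 i) \<inter> wedge (?T i) (b1 i) (b2 i)"
  proof
    fix i assume "i \<in> {..<p}"
    then have lH: "l_complete (?T i) (Hs i)" and ab: "a1 i \<in> Hs i" "a2 i \<in> Hs i" "b1 i \<in> Hs i" "b2 i \<in> Hs i"
      using asc a b unfolding ascending_lc_def by auto
    obtain c1 where "c1 \<in> Hs i" "\<forall>y\<in>topspace (?T i). c1 y = max (a1 i y) (b1 i y)"
      using l_complete_max[OF lH ab(1,3)] by blast
    moreover obtain c2 where "c2 \<in> Hs i" "\<forall>y\<in>topspace (?T i). c2 y = min (a2 i y) (b2 i y)"
      using l_complete_min[OF lH ab(2,4)] by blast
    ultimately show "\<exists>c. fst c \<in> Hs i \<and> snd c \<in> Hs i \<and>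
          wedge (?T i) (fst c) (snd c) = wedge (?T i) (a1 i) (a2 i) \<inter> wedge (?T i) (b1 i) (b2 i)"
      using wedge_max_min by (intro exI[of _ "(c1, c2)"]) simp
  qed
  then obtain c where c: "\<And>i. i < p \<Longrightarrow> fst (c i) \<in> Hs i \<and> snd (c i) \<in> Hs i \<and>
          wedge (?T i) (fst (c i)) (snd (c i)) = wedge (?T i) (a1 i) (a2 i) \<inter> wedge (?T i) (b1 i) (b2 i)"
    by (metis lessThan_iff)
  have "M \<inter> C = multiwedge_set Xs p (fst \<circ> c) (snd \<circ> c)"
    unfolding a(2) b(2) by (rule multiwedge_set_Int[symmetric]) (use c in auto)
  then show ?thesis unfolding multiwedge_iff using c
    by (intro exI[of _ "fst \<circ> c"] exI[of _ "snd \<circ> c"]) auto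
qed

text \<open>Constancy on minimal multiwedges passes to any finer ascending tuple: a minimal multiwedge of
  the finer tuple lies inside a minimal multiwedge of the coarser one.\<close>
lemma layered_refine:
  assumes ascF: "ascending_lc Xs p Fs" and ascH: "ascending_lc Xs p Hs"
    and sub: "\<And>i. i < p \<Longrightarrow> Fs i \<subseteq> Hs i"
    and const: "\<And>C. minimal_multiwedge Xs p Fs C \<Longrightarrow> \<exists>c. \<forall>z\<in>C. \<gamma> z = c"
    and M: "minimal_multiwedge Xs p Hs M"
  shows "\<exists>c. \<forall>z\<in>M. \<gamma> z = c"
proof -
  have mwM: "multiwedge Xs p Hs M" and "M \<noteq> {}"
    and minM: "\<And>M'. multiwedge Xs p Hs M' \<Longrightarrow> M' \<noteq> {} \<Longrightarrow> M' \<subseteq> M \<Longrightarrow> M' = M"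
    using M unfolding minimal_multiwedge_def by auto
  then obtain z0 where z0: "z0 \<in> M" by blast
  then have "z0 \<in> dom_layer Xs p" using multiwedge_subset_dom[OF mwM] by blast
  then obtain C where C: "minimal_multiwedge Xs p Fs C" "z0 \<in> C"
    using minimal_multiwedge_cover[OF ascF] by blast
  have "multiwedge Xs p Hs C"
    using multiwedge_family_mono[of Xs p Fs C Hs] sub C(1) unfolding minimal_multiwedge_def by blast
  then have "multiwedge Xs p Hs (M \<inter> C)" by (rule multiwedge_Int[OF ascH mwM])
  then have "M \<inter> C = M" by (rule minM) (use z0 C(2) in auto)
  then show ?thesis using const[OF C(1)] by blast
qed

lemma finite_family_limit:
  fixes \<Phi> :: "('p \<Rightarrow> real) set"
  assumes fin: "finite \<Phi>" and N: "N \<noteq> bot"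
    and ev: "eventually (\<lambda>\<xi>. restrict \<xi> U \<in> \<Phi>) N"
    and conv: "\<forall>x\<in>U. ((\<lambda>\<xi>. \<xi> x) \<longlongrightarrow> g x) N"
  shows "\<exists>\<phi>\<in>\<Phi>. \<forall>x\<in>U. \<phi> x = g x"
proof (rule ccontr)
  assume "\<not> ?thesis"
  then obtain w where w: "\<And>\<phi>. \<phi> \<in> \<Phi> \<Longrightarrow> w \<phi> \<in> U \<and> \<phi> (w \<phi>) \<noteq> g (w \<phi>)" by metis
  have "\<forall>\<phi>\<in>\<Phi>. eventually (\<lambda>\<xi>. dist (\<xi> (w \<phi>)) (g (w \<phi>)) < dist (\<phi> (w \<phi>)) (g (w \<phi>))) N"
    using w conv by (auto intro!: tendstoD)
  then have "eventually (\<lambda>\<xi>. \<forall>\<phi>\<in>\<Phi>. dist (\<xi> (w \<phi>)) (g (w \<phi>)) < dist (\<phi> (w \<phi>)) (g (w \<phi>))) N"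
    using fin by (rule eventually_ball_finite[rotated])
  then have "eventually (\<lambda>_. False) N"
  proof (rule eventually_mono[OF eventually_conj[OF ev]])
    fix \<xi> assume \<xi>: "restrict \<xi> U \<in> \<Phi> \<and> (\<forall>\<phi>\<in>\<Phi>. dist (\<xi> (w \<phi>)) (g (w \<phi>)) < dist (\<phi> (w \<phi>)) (g (w \<phi>)))"
    define \<phi> where "\<phi> = restrict \<xi> U"
    have "\<phi> \<in> \<Phi>" "w \<phi> \<in> U" using \<xi> w unfolding \<phi>_def by auto
    then show False using \<xi> unfolding \<phi>_def by auto
  qed
  then show False using N by (simp add: eventually_False)
qed

text \<open>The join of two l-complete continuous dissections F and G: continuous functions which on each
  adapted open set U (where F and G have finitely many restrictions) are obtained by choosing,
  according to the order type of the restricted pieces at x, one of these pieces.\<close>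
locale dissection_pair =
  fixes T :: "'p topology" and F G :: "('p \<Rightarrow> real) set"
  assumes cF: "cont_dissection T F" and lF: "l_complete T F"
    and cG: "cont_dissection T G" and lG: "l_complete T G"
begin

definition adapted :: "'p set \<Rightarrow> bool" where
  "adapted U \<longleftrightarrow> openin T U \<and> finite ((\<lambda>\<xi>. restrict \<xi> U) ` F) \<and> finite ((\<lambda>\<xi>. restrict \<xi> U) ` G)"

definition pieces :: "'p set \<Rightarrow> ('p \<Rightarrow> real) set" where
  "pieces U = (\<lambda>\<xi>. restrict \<xi> U) ` (F \<union> G)"

definition order_type :: "'p set \<Rightarrow> 'p \<Rightarrow> (('p \<Rightarrow> real) \<times> ('p \<Rightarrow> real)) set" where
  "order_type U x = {(s, s') \<in> pieces U \<times> pieces U. s x \<le> s' x}"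

definition selects :: "'p set \<Rightarrow> ('p \<Rightarrow> real) \<Rightarrow> ((('p \<Rightarrow> real) \<times> ('p \<Rightarrow> real)) set \<Rightarrow> 'p \<Rightarrow> real) \<Rightarrow> bool" where
  "selects U h c \<longleftrightarrow> (\<forall>r. c r \<in> pieces U) \<and> (\<forall>x\<in>U. h x = c (order_type U x) x)"

definition join :: "('p \<Rightarrow> real) set" where
  "join = {h. continuous_map T euclideanreal h \<and> (\<forall>U. adapted U \<longrightarrow> (\<exists>c. selects U h c))}"

lemma finite_pieces: "adapted U \<Longrightarrow> finite (pieces U)"
  unfolding adapted_def pieces_def by (simp add: image_Un)

lemma adapted_subset: "adapted U \<Longrightarrow> U \<subseteq> topspace T"
  unfolding adapted_def by (simp add: openin_subset)

lemma adapted_nhd: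
  assumes "x \<in> topspace T" shows "\<exists>U. adapted U \<and> x \<in> U"
proof -
  obtain U1 where U1: "openin T U1" "x \<in> U1" "finite ((\<lambda>\<xi>. restrict \<xi> U1) ` F)"
    using cF assms unfolding cont_dissection_def by blast
  obtain U2 where U2: "openin T U2" "x \<in> U2" "finite ((\<lambda>\<xi>. restrict \<xi> U2) ` G)"
    using cG assms unfolding cont_dissection_def by blast
  have restr: "(\<lambda>\<xi>. restrict \<xi> (U1 \<inter> U2)) ` H = (\<lambda>\<xi>. restrict \<xi> (U1 \<inter> U2)) ` (\<lambda>\<xi>. restrict \<xi> V) ` H"
    if "U1 \<inter> U2 \<subseteq> V" for H :: "('p \<Rightarrow> real) set" and V
    unfolding image_image using that by (intro image_cong refl) (auto simp: restrict_def fun_eq_iff)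
  have "adapted (U1 \<inter> U2)"
    unfolding adapted_def using U1 U2 restr[of U1 F] restr[of U2 G] by auto
  then show ?thesis using U1 U2 by blast
qed

text \<open>On an adapted set the join has only finitely many restrictions: each is determined by a
  choice of a piece for each of the finitely many order types.\<close>
lemma finite_join_restrictions:
  assumes U: "adapted U" shows "finite ((\<lambda>h. restrict h U) ` join)"
proof -
  let ?P = "PiE (order_type U ` U) (\<lambda>_. pieces U)"
  have "order_type U ` U \<subseteq> Pow (pieces U \<times> pieces U)"
    unfolding order_type_def by auto
  then have "finite (order_type U ` U)"
    by (rule finite_subset) (simp add: finite_pieces[OF U])
  then have "finite ?P" using finite_pieces[OF U] by (simp add: finite_PiE)
  moreover have "(\<lambda>h. restrict h U) ` join \<subseteq> (\<lambda>c. restrict (\<lambda>x. c (order_type U x) x) U) ` ?P"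
  proof
    fix k assume "k \<in> (\<lambda>h. restrict h U) ` join"
    then obtain h where h: "k = restrict h U" "h \<in> join" by blast
    then obtain c where c: "selects U h c"
      using U unfolding join_def by auto
    have "restrict c (order_type U ` U) \<in> ?P" using c unfolding selects_def by auto
    moreover have "k = restrict (\<lambda>x. restrict c (order_type U ` U) (order_type U x) x) U"
      using c h unfolding selects_def by (auto simp: fun_eq_iff)
    ultimately show "k \<in> (\<lambda>c. restrict (\<lambda>x. c (order_type U x) x) U) ` ?P" by blast
  qed
  ultimately show ?thesis by (meson finite_imageI finite_subset)
qed

lemma join_superset: "F \<union> G \<subseteq> join"
proof
  fix \<xi> assume \<xi>: "\<xi> \<in> F \<union> G"
  then have "continuous_map T euclideanreal \<xi>" using cF cG unfolding cont_dissection_def by blast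
  moreover have "selects U \<xi> (\<lambda>_. restrict \<xi> U)" for U
    using \<xi> unfolding selects_def pieces_def by auto
  ultimately show "\<xi> \<in> join" unfolding join_def by blast
qed

lemma join_max: "h1 \<in> join \<Longrightarrow> h2 \<in> join \<Longrightarrow> (\<lambda>x. max (h1 x) (h2 x)) \<in> join"
  unfolding join_def
proof (safe intro!: continuous_map_real_max)
  fix U assume "adapted U" "\<forall>U. adapted U \<longrightarrow> (\<exists>c. selects U h1 c)" "\<forall>U. adapted U \<longrightarrow> (\<exists>c. selects U h2 c)"
  then obtain c1 c2 where c1: "selects U h1 c1" and c2: "selects U h2 c2" by blast
  show "\<exists>c. selects U (\<lambda>x. max (h1 x) (h2 x)) c"
    by (rule exI[of _ "\<lambda>r. if (c1 r, c2 r) \<in> r then c2 r else c1 r"])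
       (use c1 c2 in \<open>auto simp: selects_def order_type_def max_def\<close>)
qed

lemma join_min: "h1 \<in> join \<Longrightarrow> h2 \<in> join \<Longrightarrow> (\<lambda>x. min (h1 x) (h2 x)) \<in> join"
  unfolding join_def
proof (safe intro!: continuous_map_real_min)
  fix U assume "adapted U" "\<forall>U. adapted U \<longrightarrow> (\<exists>c. selects U h1 c)" "\<forall>U. adapted U \<longrightarrow> (\<exists>c. selects U h2 c)"
  then obtain c1 c2 where c1: "selects U h1 c1" and c2: "selects U h2 c2" by blast
  show "\<exists>c. selects U (\<lambda>x. min (h1 x) (h2 x)) c"
    by (rule exI[of _ "\<lambda>r. if (c1 r, c2 r) \<in> r then c1 r else c2 r"])
       (use c1 c2 in \<open>auto simp: selects_def order_type_def min_def\<close>)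
qed

lemma join_range:
  assumes "h \<in> join" "x \<in> topspace T" shows "h x \<in> {0..1}"
proof -
  obtain U c where U: "adapted U" "x \<in> U" and c: "selects U h c"
    using adapted_nhd assms unfolding join_def by blast
  then obtain \<xi> where \<xi>: "\<xi> \<in> F \<union> G" "c (order_type U x) = restrict \<xi> U"
    unfolding selects_def pieces_def by blast
  have "h x = c (order_type U x) x" using c U(2) unfolding selects_def by blast
  also have "\<dots> = \<xi> x" using \<xi>(2) U(2) by simp
  finally have "h x = \<xi> x" .
  moreover have "\<xi> ` topspace T \<subseteq> {0..1}"
    using \<xi>(1) cF cG unfolding cont_dissection_def by blast
  ultimately show ?thesis using assms(2) by auto
qed

text \<open>Closure of the join under limits of nets: on every adapted set the limit coincides with
  one of finitely many restrictions of members of the join.\<close>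
lemma join_limit:
  assumes N: "N \<noteq> bot" and ev: "eventually (\<lambda>\<xi>. \<xi> \<in> join) N"
    and conv: "\<forall>x\<in>topspace T. ((\<lambda>\<xi>. \<xi> x) \<longlongrightarrow> g x) N"
  shows "g \<in> join"
proof -
  have "\<exists>h\<in>join. \<forall>x\<in>U. h x = g x" if U: "adapted U" for U
  proof -
    have "\<exists>\<phi>\<in>(\<lambda>h. restrict h U) ` join. \<forall>x\<in>U. \<phi> x = g x"
      by (rule finite_family_limit[OF finite_join_restrictions[OF U] N])
         (use ev conv adapted_subset[OF U] in \<open>auto elim!: eventually_mono\<close>)
    then show ?thesis by auto
  qed
  then obtain hU where hU: "\<And>U. adapted U \<Longrightarrow> hU U \<in> join \<and> (\<forall>x\<in>U. hU U x = g x)" by metis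
  have "continuous_map T euclideanreal g"
    unfolding continuous_map_def
  proof (intro conjI allI impI)
    show "g \<in> topspace T \<rightarrow> topspace euclideanreal" by simp
    fix V :: "real set" assume V: "openin euclideanreal V"
    have "{x \<in> topspace T. g x \<in> V} = (\<Union>U\<in>{U. adapted U}. {x \<in> U. hU U x \<in> V})"
      using hU adapted_nhd adapted_subset by fastforce
    moreover have "openin T {x \<in> U. hU U x \<in> V}" if "adapted U" for U
      using openin_continuous_map_preimage_gen[of T euclideanreal "hU U" U V] hU[OF that] that V
      unfolding join_def adapted_def by auto
    ultimately show "openin T {x \<in> topspace T. g x \<in> V}" by auto
  qed
  moreover have "\<exists>c. selects U g c" if U: "adapted U" for U
  proof -
    obtain c where "selects U (hU U) c" using hU[OF U] U unfolding join_def by blast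
    then have "selects U g c" using hU[OF U] unfolding selects_def by auto
    then show ?thesis by blast
  qed
  ultimately show ?thesis unfolding join_def by blast
qed

lemma join_dissection: "cont_dissection T join"
  unfolding cont_dissection_def
proof (intro conjI)
  show "\<forall>\<xi>\<in>join. continuous_map T euclideanreal \<xi> \<and> \<xi> ` topspace T \<subseteq> {0..1}"
  proof (intro ballI conjI)
    fix \<xi> assume "\<xi> \<in> join"
    then show "continuous_map T euclideanreal \<xi>" "\<xi> ` topspace T \<subseteq> {0..1}"
      using join_range unfolding join_def by blast+
  qed
  obtain zero one where "zero \<in> F" "\<forall>x\<in>topspace T. zero x = 0" "one \<in> F" "\<forall>x\<in>topspace T. one x = 1"
    using cF unfolding cont_dissection_def by meson
  then show "\<exists>\<xi>\<in>join. \<forall>x\<in>topspace T. \<xi> x = 0" "\<exists>\<xi>\<in>join. \<forall>x\<in>topspace T. \<xi> x = 1"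
    using join_superset by blast+
  show "\<forall>x\<in>topspace T. \<exists>U. openin T U \<and> x \<in> U \<and> finite ((\<lambda>\<xi>. restrict \<xi> U) ` join)"
  proof
    fix x assume "x \<in> topspace T"
    then obtain U where "adapted U" "x \<in> U" using adapted_nhd by blast
    then show "\<exists>U. openin T U \<and> x \<in> U \<and> finite ((\<lambda>\<xi>. restrict \<xi> U) ` join)"
      using finite_join_restrictions unfolding adapted_def by blast
  qed
qed

lemma join_l_complete: "l_complete T join"
  unfolding l_complete_def
proof (intro conjI ballI allI impI)
  fix h1 h2 assume "h1 \<in> join" "h2 \<in> join"
  then show "\<exists>\<eta>\<in>join. \<forall>x\<in>topspace T. \<eta> x = max (h1 x) (h2 x)"
    by (intro bexI[of _ "\<lambda>x. max (h1 x) (h2 x)"] join_max) simp_all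
next
  fix h1 h2 assume "h1 \<in> join" "h2 \<in> join"
  then show "\<exists>\<eta>\<in>join. \<forall>x\<in>topspace T. \<eta> x = min (h1 x) (h2 x)"
    by (intro bexI[of _ "\<lambda>x. min (h1 x) (h2 x)"] join_min) simp_all
next
  fix N :: "('p \<Rightarrow> real) filter" and g
  assume "N \<noteq> bot \<and> eventually (\<lambda>\<xi>. \<xi> \<in> join) N \<and> (\<forall>x\<in>topspace T. ((\<lambda>\<xi>. \<xi> x) \<longlongrightarrow> g x) N)"
  then show "\<exists>\<eta>\<in>join. \<forall>x\<in>topspace T. \<eta> x = g x"
    by (intro bexI[of _ g] join_limit[of N]) auto
qed

end

lemma common_refinement:
  assumes "cont_dissection T F" "l_complete T F" "cont_dissection T G" "l_complete T G"
  shows "\<exists>H. cont_dissection T H \<and> l_complete T H \<and> F \<subseteq> H \<and> G \<subseteq> H"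
proof -
  interpret dissection_pair T F G using assms by unfold_locales
  show ?thesis using join_dissection join_l_complete join_superset by (intro exI[of _ join]) auto
qed

lemma ascending_common_refinement:
  assumes "ascending_lc Xs p Fs" "ascending_lc Xs p Gs"
  shows "\<exists>Hs. ascending_lc Xs p Hs \<and> (\<forall>i<p. Fs i \<subseteq> Hs i \<and> Gs i \<subseteq> Hs i)"
proof -
  have "\<forall>i\<in>{..<p}. \<exists>H. cont_dissection (Xle Xs (Suc i)) H \<and> l_complete (Xle Xs (Suc i)) H
                      \<and> Fs i \<subseteq> H \<and> Gs i \<subseteq> H"
    using assms common_refinement unfolding ascending_lc_def by blast
  then obtain Hs where "\<forall>i\<in>{..<p}. cont_dissection (Xle Xs (Suc i)) (Hs i)
      \<and> l_complete (Xle Xs (Suc i)) (Hs i) \<and> Fs i \<subseteq> Hs i \<and> Gs i \<subseteq> Hs i"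
    by (rule bchoice[THEN exE])
  then show ?thesis unfolding ascending_lc_def by (intro exI[of _ Hs]) auto
qed

text \<open>Layered functions are closed under pointwise combination (via a common refinement of their
  tuples) and under postcomposition.\<close>
lemma layered_combine:
  assumes l1: "layered Xs p \<gamma>1" and l2: "layered Xs p \<gamma>2"
  shows "layered Xs p (\<lambda>z. \<Phi> (\<gamma>1 z) (\<gamma>2 z))"
proof -
  obtain Fs where F: "ascending_lc Xs p Fs"
    and const1: "\<And>M. minimal_multiwedge Xs p Fs M \<Longrightarrow> \<exists>c. \<forall>z\<in>M. \<gamma>1 z = c"
    using l1 unfolding layered_def by blast
  obtain Gs where G: "ascending_lc Xs p Gs"
    and const2: "\<And>M. minimal_multiwedge Xs p Gs M \<Longrightarrow> \<exists>c. \<forall>z\<in>M. \<gamma>2 z = c"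
    using l2 unfolding layered_def by blast
  obtain Hs where H: "ascending_lc Xs p Hs" and sub: "\<And>i. i < p \<Longrightarrow> Fs i \<subseteq> Hs i \<and> Gs i \<subseteq> Hs i"
    using ascending_common_refinement[OF F G] by blast
  have "\<exists>c. \<forall>z\<in>M. \<Phi> (\<gamma>1 z) (\<gamma>2 z) = c" if M: "minimal_multiwedge Xs p Hs M" for M
  proof -
    obtain c1 where "\<forall>z\<in>M. \<gamma>1 z = c1" using layered_refine[OF F H _ const1 M] sub by blast
    moreover obtain c2 where "\<forall>z\<in>M. \<gamma>2 z = c2" using layered_refine[OF G H _ const2 M] sub by blast
    ultimately show ?thesis by auto
  qed
  then show ?thesis unfolding layered_def using H by blast
qed

lemma layered_compose: "layered Xs p \<gamma> \<Longrightarrow> layered Xs p (\<lambda>z. \<psi> (\<gamma> z))"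
  unfolding layered_def by metis

lemma half_power_eventually_small:
  assumes "0 < e" shows "\<exists>N. \<forall>n\<ge>N. 4 * (1/2::real)^n < e"
proof -
  obtain N where N: "(1/2::real)^N < e/4"
    using real_arch_pow_inv[of "e/4" "1/2"] assms by auto
  have "4 * (1/2::real)^n < e" if "N \<le> n" for n
  proof -
    have "(1/2::real)^n \<le> (1/2)^N" by (rule power_decreasing) (use that in auto)
    then show ?thesis using N by linarith
  qed
  then show ?thesis by blast
qed

lemma geometric_limit_bound:
  fixes s :: "nat \<Rightarrow> 'a::complete_space"
  assumes step: "\<And>k. dist (s k) (s (Suc k)) \<le> (1/2)^k"
  shows "dist (lim s) (s k) \<le> 2 * (1/2)^k"
proof -
  have tail: "dist (s k) (s (k + j)) \<le> 2 * (1/2)^k - 2 * (1/2)^(k + j)" for k j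
  proof (induction j)
    case (Suc j)
    have "dist (s k) (s (k + Suc j)) \<le> dist (s k) (s (k + j)) + dist (s (k + j)) (s (Suc (k + j)))"
      using dist_triangle by simp
    also have "\<dots> \<le> 2 * (1/2)^k - 2 * (1/2)^(k + j) + (1/2)^(k + j)"
      using Suc step[of "k + j"] by linarith
    finally show ?case by simp
  qed simp
  have close: "dist (s k) (s m) \<le> 2 * (1/2)^k" if "k \<le> m" for k m
  proof -
    have "dist (s k) (s m) \<le> 2 * (1/2)^k - 2 * (1/2)^m" using tail[of k "m - k"] that by simp
    moreover have "(0::real) \<le> (1/2)^m" by simp
    ultimately show ?thesis by linarith
  qed
  have "Cauchy s"
  proof (rule metric_CauchyI)
    fix e :: real assume "0 < e"
    then obtain N where N: "\<forall>n\<ge>N. 4 * (1/2::real)^n < e"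
      using half_power_eventually_small by blast
    have "dist (s m) (s n) < e" if "N \<le> m" "N \<le> n" for m n
    proof -
      have "4 * (1/2::real)^N < e" using N by blast
      then show ?thesis
        using dist_triangle3[of "s m" "s n" "s N"] close[OF that(1)] close[OF that(2)] by linarith
    qed
    then show "\<exists>M. \<forall>m\<ge>M. \<forall>n\<ge>M. dist (s m) (s n) < e" by blast
  qed
  then have "s \<longlonglongrightarrow> lim s" by (simp add: Cauchy_convergent_iff convergent_LIMSEQ_iff)
  then have "(\<lambda>m. dist (s m) (s k)) \<longlonglongrightarrow> dist (lim s) (s k)"
    by (intro tendsto_intros)
  moreover have "eventually (\<lambda>m. dist (s m) (s k) \<le> 2 * (1/2)^k) sequentially"
    unfolding eventually_sequentially by (intro exI[of _ k] allI impI) (metis close dist_commute)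
  ultimately show ?thesis by (rule tendsto_upperbound) simp
qed

lemma almost_layered_of_geometric_bound:
  assumes layered: "\<And>k. layered Xs p (g k)"
    and bound: "\<And>k z. z \<in> dom_layer Xs p \<Longrightarrow> dist (F z) (g k z) \<le> 2 * (1/2)^k"
  shows "almost_layered Xs p UNIV dist F"
  unfolding almost_layered_def
proof (intro conjI exI[of _ g] allI impI)
  fix e :: real assume "0 < e"
  then obtain N where N: "\<forall>n\<ge>N. 4 * (1/2::real)^n < e"
    using half_power_eventually_small by blast
  have "dist (F z) (g n z) \<le> e" if "N \<le> n" "z \<in> dom_layer Xs p" for n z
  proof -
    have "4 * (1/2::real)^n < e" "0 \<le> (1/2::real)^n" using N that(1) by auto
    then show ?thesis using bound[OF that(2), of n] by linarith
  qed
  then show "\<exists>N. \<forall>n\<ge>N. \<forall>z\<in>dom_layer Xs p. dist (F z) (g n z) \<le> e" by blast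
qed (use layered in auto)

text \<open>Since every stage is a fixed function of the previous stage and the next set,
  the selections inherit layeredness.\<close>
primrec lift_seq :: "(nat \<Rightarrow> 'z \<Rightarrow> 'g::metric_space set) \<Rightarrow> nat \<Rightarrow> 'z \<Rightarrow> 'g" where
  "lift_seq h 0 = (\<lambda>z. SOME a. a \<in> h 0 z)"
| "lift_seq h (Suc k) = (\<lambda>z. SOME b. b \<in> h (Suc k) z \<and> dist (lift_seq h k z) b < (1/2)^k)"

lemma lift_seq_layered:
  assumes "\<And>k. layered Xs p (h k)" shows "layered Xs p (lift_seq h k)"
proof (induction k)
  case 0
  show ?case using layered_compose[OF assms[of 0], of "\<lambda>V. SOME a. a \<in> V"] by simp
next
  case (Suc k)
  show ?case using layered_combine[OF Suc assms[of "Suc k"],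
      of "\<lambda>a V. SOME b. b \<in> V \<and> dist a b < (1/2)^k"] by simp
qed

lemma lift_seq_mem_dist:
  assumes ne: "h 0 z \<noteq> {}"
    and step: "\<And>k a. a \<in> h k z \<Longrightarrow> \<exists>b\<in>h (Suc k) z. dist a b < (1/2)^k"
  shows "lift_seq h k z \<in> h k z \<and> dist (lift_seq h k z) (lift_seq h (Suc k) z) < (1/2)^k"
proof -
  have mem: "lift_seq h k z \<in> h k z" for k
  proof (induction k)
    case 0 show ?case using ne by (simp add: some_in_eq)
  next
    case (Suc k) show ?case using someI_ex[OF step[OF Suc, unfolded Bex_def]] by simp
  qed
  then show ?thesis using someI_ex[OF step[OF mem, unfolded Bex_def]] by simp
qed

lemma almost_layered_fast_approx:
  fixes f :: "(nat \<Rightarrow> 'a) \<times> (nat \<Rightarrow> real) \<Rightarrow> 'b"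
  assumes "almost_layered Xs p Y \<delta> f"
  shows "\<exists>h. \<forall>k. layered Xs p (h k) \<and>
           (\<forall>z\<in>dom_layer Xs p. h k z \<in> Y \<and> \<delta> (f z) (h k z) < (1/2)^(k+1))"
proof -
  obtain g :: "nat \<Rightarrow> (nat \<Rightarrow> 'a) \<times> (nat \<Rightarrow> real) \<Rightarrow> 'b"
    where g: "\<forall>n. layered Xs p (g n) \<and> (\<forall>z\<in>dom_layer Xs p. g n z \<in> Y)"
    and conv: "\<forall>\<epsilon>>0. \<exists>N. \<forall>n\<ge>N. \<forall>z\<in>dom_layer Xs p. \<delta> (f z) (g n z) \<le> \<epsilon>"
    using assms unfolding almost_layered_def by blast
  have "\<exists>n. \<forall>z\<in>dom_layer Xs p. \<delta> (f z) (g n z) < (1/2)^(k+1)" for k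
  proof -
    obtain N where N: "\<forall>z\<in>dom_layer Xs p. \<delta> (f z) (g N z) \<le> (1/2)^(k+2)"
      using conv[rule_format, of "(1/2)^(k+2)"] by auto
    have "(1/2::real)^(k+2) < (1/2)^(k+1)" by (simp add: power_strict_decreasing)
    then have "\<forall>z\<in>dom_layer Xs p. \<delta> (f z) (g N z) < (1/2)^(k+1)"
      using N by (meson le_less_trans)
    then show ?thesis by blast
  qed
  then obtain n where "\<And>k. \<forall>z\<in>dom_layer Xs p. \<delta> (f z) (g (n k) z) < (1/2)^(k+1)" by metis
  then show ?thesis using g by (intro exI[of _ "\<lambda>k. g (n k)"]) auto
qed

lemma quot_dist_sym: "quot_dist U V = quot_dist V U"
proof -
  have "{dist u v | u v. u \<in> U \<and> v \<in> V} = {dist u v | u v. u \<in> V \<and> v \<in> U}"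
    by (auto; metis dist_commute)
  then show ?thesis unfolding quot_dist_def by simp
qed

context
  fixes B :: "'g :: {ab_group_add, metric_space} set"
  assumes inv: "\<forall>x y z :: 'g. dist (x + z) (y + z) = dist x y"
    and B0: "0 \<in> B" and Bsub: "\<forall>x\<in>B. \<forall>y\<in>B. x - y \<in> B"
begin

lemma subgroup_add: "x \<in> B \<Longrightarrow> y \<in> B \<Longrightarrow> x + y \<in> B"
  using Bsub B0 by (metis diff_0 diff_minus_eq_add)

lemma coset_mem: "a \<in> coset B c \<longleftrightarrow> a - c \<in> B"
  unfolding coset_def by (auto simp: image_iff intro: bexI[of _ "a - c"])

lemma coset_self: "c \<in> coset B c"
  using B0 by (simp add: coset_mem)

lemma coset_eq: "a \<in> coset B c \<Longrightarrow> coset B a = coset B c"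
  unfolding coset_mem set_eq_iff
  by (metis Bsub subgroup_add diff_add_cancel diff_diff_eq2)

lemma dist_translate: "dist (x - c) (y - c) = dist x (y :: 'g)"
  using inv[rule_format, of x "-c" y] by simp

lemma coset_closed:
  assumes "closed B" shows "closed (coset B c)"
  unfolding closed_sequential_limits
proof (intro allI impI, elim conjE)
  fix s l assume s: "\<forall>n. s n \<in> coset B c" and lim: "s \<longlonglongrightarrow> l"
  have "s n - c \<in> B" for n using s coset_mem by blast
  moreover have "(\<lambda>n. s n - c) \<longlonglongrightarrow> l - c"
    using lim unfolding tendsto_iff dist_translate .
  ultimately have "l - c \<in> B" by (rule closed_sequentially[OF assms])
  then show "l \<in> coset B c" by (simp add: coset_mem)
qed

text \<open>The quotient distance of two cosets is attained up to any margin from every point of the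
  first coset, by translation invariance of the metric.\<close>
lemma coset_approx:
  assumes U: "U \<in> quotient_set B" and V: "V \<in> quotient_set B"
    and q: "quot_dist U V < r" and a: "a \<in> U"
  shows "\<exists>v\<in>V. dist a v < r"
proof -
  obtain c1 c2 where c: "U = coset B c1" "V = coset B c2"
    using U V unfolding quotient_set_def by blast
  have "c1 \<in> U" "c2 \<in> V" using c coset_self by auto
  then have "{dist u v | u v. u \<in> U \<and> v \<in> V} \<noteq> {}" by blast
  from cInf_lessD[OF this q[unfolded quot_dist_def]]
  obtain u v where uv: "u \<in> U" "v \<in> V" "dist u v < r" by blast
  have "coset B u = coset B a" using a uv(1) c(1) coset_eq by metis
  then have "a - u \<in> B" using coset_self coset_mem by blast
  moreover have "v - c2 \<in> B" using uv(2) c(2) coset_mem by blast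
  ultimately have "v + (a - u) - c2 \<in> B"
    using subgroup_add[of "v - c2" "a - u"] by (simp add: algebra_simps)
  then have "v + (a - u) \<in> V" using c(2) coset_mem by blast
  moreover have "dist a (v + (a - u)) = dist u v"
    using inv[rule_format, of u "a - u" v] by simp
  ultimately show ?thesis using uv(3) by (intro bexI[of _ "v + (a - u)"]) auto
qed

lemma coset_approx_through:
  assumes U: "U \<in> quotient_set B" and V: "V \<in> quotient_set B" and W: "W \<in> quotient_set B"
    and UV: "quot_dist U V < r" and UW: "quot_dist U W < s" and a: "a \<in> V"
  shows "\<exists>b\<in>W. dist a b < r + s"
proof -
  obtain u where u: "u \<in> U" "dist a u < r"
    using coset_approx[OF V U _ a] UV quot_dist_sym by metis
  obtain b where b: "b \<in> W" "dist u b < s"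
    using coset_approx[OF U W UW u(1)] by blast
  have "dist a b < r + s" using dist_triangle[of a b u] u(2) b(2) by linarith
  then show ?thesis using b(1) by blast
qed

lemma coset_of_approximated_point:
  assumes Bclosed: "closed B" and U: "U \<in> quotient_set B"
    and approx: "\<And>e. 0 < e \<Longrightarrow> \<exists>a\<in>U. dist a x < e"
  shows "U = coset B x"
proof -
  obtain c where c: "U = coset B c" using U unfolding quotient_set_def by blast
  have "x \<in> closure U" using approx unfolding closure_approachable by blast
  then have "x \<in> U"
    using coset_closed[OF Bclosed] c by simp
  then show ?thesis using coset_eq c by simp
qed

lemma lift_seq_coset_steps:
  assumes U: "U \<in> quotient_set B" and V: "\<And>k. h k z \<in> quotient_set B"
    and close: "\<And>k. quot_dist U (h k z) < (1/2)^(k+1)"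
  shows "lift_seq h k z \<in> h k z \<and> dist (lift_seq h k z) (lift_seq h (Suc k) z) < (1/2)^k"
proof (rule lift_seq_mem_dist)
  show "h 0 z \<noteq> {}" using V[of 0] coset_self unfolding quotient_set_def by blast
  fix k a assume "a \<in> h k z"
  then obtain b where "b \<in> h (Suc k) z" "dist a b < (1/2)^(k+1) + (1/2)^(Suc k+1)"
    using coset_approx_through[OF U V V close close] by blast
  moreover have "(1/2::real)^(k+1) + (1/2)^(Suc k+1) < (1/2)^k" by simp
  ultimately show "\<exists>b\<in>h (Suc k) z. dist a b < (1/2)^k" by (meson less_trans)
qed

end

context
  fixes B :: "'g :: {ab_group_add, complete_space} set"
  assumes inv: "\<forall>x y z :: 'g. dist (x + z) (y + z) = dist x y"
    and B0: "0 \<in> B" and Bsub: "\<forall>x\<in>B. \<forall>y\<in>B. x - y \<in> B"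
begin

text \<open>In a complete space the selections converge geometrically, and since they approximate the
  closed coset U, their limit represents U.\<close>
lemma lift_seq_coset_limit:
  assumes Bclosed: "closed B" and U: "U \<in> quotient_set B" and V: "\<And>k. h k z \<in> quotient_set B"
    and close: "\<And>k. quot_dist U (h k z) < (1/2)^(k+1)"
  shows "(\<forall>k. dist (lim (\<lambda>k. lift_seq h k z)) (lift_seq h k z) \<le> 2 * (1/2)^k)
         \<and> U = coset B (lim (\<lambda>k. lift_seq h k z))"
proof
  let ?s = "\<lambda>k. lift_seq h k z"
  note steps = lift_seq_coset_steps[OF inv B0 Bsub, of U h z, OF U V close]
  show bound: "\<forall>k. dist (lim ?s) (?s k) \<le> 2 * (1/2)^k"
    using geometric_limit_bound[of ?s] steps by (simp add: less_imp_le)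
  show "U = coset B (lim ?s)"
  proof (rule coset_of_approximated_point[OF inv B0 Bsub Bclosed U])
    fix e :: real assume "0 < e"
    then obtain k where k: "4 * (1/2::real)^k < e" using half_power_eventually_small by blast
    have "quot_dist (h k z) U < (1/2)^(k+1)" using close quot_dist_sym by metis
    then obtain a where a: "a \<in> U" "dist (?s k) a < (1/2)^(k+1)"
      using coset_approx[OF inv B0 Bsub V U] steps by blast
    have "dist a (lim ?s) \<le> dist (?s k) a + dist (lim ?s) (?s k)"
      using dist_triangle3[of a "lim ?s" "?s k"] by (simp add: dist_commute)
    moreover have "(1/2::real)^(k+1) < (1/2)^k" "0 \<le> (1/2::real)^k"
      by (simp_all add: power_strict_decreasing)
    ultimately have "dist a (lim ?s) < e" using a(2) bound[rule_format, of k] k by linarith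
    then show "\<exists>a\<in>U. dist a (lim ?s) < e" using a(1) by blast
  qed
qed

end

theorem proposition6p4:
  fixes Xs :: "nat \<Rightarrow> 'a topology" and p :: nat
    and B :: "'g :: {ab_group_add, polish_space} set"
    and f :: "(nat \<Rightarrow> 'a) \<times> (nat \<Rightarrow> real) \<Rightarrow> 'g set"
  assumes metr: "\<forall>i<p. metrizable_space (Xs i)"
    and inv: "\<forall>x y z :: 'g. dist (x + z) (y + z) = dist x y"
    and Bclosed: "closed B" and B0: "0 \<in> B" and Bsub: "\<forall>x\<in>B. \<forall>y\<in>B. x - y \<in> B"
    and f: "almost_layered Xs p (quotient_set B) quot_dist f"
  shows "\<exists>F :: (nat \<Rightarrow> 'a) \<times> (nat \<Rightarrow> real) \<Rightarrow> 'g.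
           almost_layered Xs p UNIV dist F \<and>
           (\<forall>z\<in>dom_layer Xs p. f z = coset B (F z))"
proof -
  let ?D = "dom_layer Xs p"
  have fQ: "\<And>z. z \<in> ?D \<Longrightarrow> f z \<in> quotient_set B" using f unfolding almost_layered_def by blast
  obtain h where hL: "\<And>k. layered Xs p (h k)" and hQ: "\<And>k z. z \<in> ?D \<Longrightarrow> h k z \<in> quotient_set B"
    and hf: "\<And>k z. z \<in> ?D \<Longrightarrow> quot_dist (f z) (h k z) < (1/2)^(k+1)"
    using almost_layered_fast_approx[OF f] by blast
  define F where "F z = lim (\<lambda>k. lift_seq h k z)" for z
  have lift: "(\<forall>k. dist (F z) (lift_seq h k z) \<le> 2 * (1/2)^k) \<and> f z = coset B (F z)"
    if "z \<in> ?D" for z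
    unfolding F_def using that fQ hQ hf by (intro lift_seq_coset_limit[OF inv B0 Bsub Bclosed])
  have "almost_layered Xs p UNIV dist F"
  proof (rule almost_layered_of_geometric_bound[of Xs p "lift_seq h"])
    show "layered Xs p (lift_seq h k)" for k using lift_seq_layered hL by blast
  qed (use lift in blast)
  then show ?thesis using lift by blast
qed

end
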